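(* Let $a\in\mathbb{N}$ and $b,d\in\mathbb{Z}$. Suppose there is a prime $p$ with $v_p(a)>\max\{v_p(b),v_p(d)\}$ and $v_p(b)\neq v_p(d)$. Then there exists a completely multiplicative function $f:\mathbb{N}\to\mathbb{S}^1$ such that $$\liminf_{n\to\infty}|f(an+b)-f(an+d)|>0.$$
   Context: $\mathbb{N}=\{1,2,\dots\}$, $\mathbb{S}^1$ the unit circle; completely multiplicative means $f(mn)=f(m)f(n)$. $v_p$ is the $p$-adic valuation (with $v_p(0)=\infty$). The expression is considered for $n$ large enough that $an+b,an+d\ge1$. *)

theory Defs
  imports "HOL-Analysis.Analysis" "HOL-Computational_Algebra.Computational_Algebra"
begin

definition vp :: "nat \<Rightarrow> int \<Rightarrow> enat" where
  "vp p x = (if x = 0 then \<infinity> else enat (multiplicity (int p) x))"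

text \<open>Completely multiplicative function from the positive integers to the unit circle;
  values at 0 are irrelevant.\<close>
definition cm_unimodular :: "(nat \<Rightarrow> complex) \<Rightarrow> bool" where
  "cm_unimodular f \<longleftrightarrow>
     (\<forall>n\<ge>1. cmod (f n) = 1) \<and>
     (\<forall>m\<ge>1. \<forall>n\<ge>1. f (m * n) = f m * f n)"

end

theory Submission
  imports Defs
begin

text \<open>Take \<open>f(m) = e^{i\<theta> v_p(m)}\<close> with \<open>\<theta> = \<pi>/(v_p(d) - v_p(b))\<close>. Since \<open>v_p(a)\<close> exceeds
  both \<open>v_p(b)\<close> and \<open>v_p(d)\<close>, adding the multiple \<open>an\<close> of \<open>p^{v_p(a)}\<close> changes neither valuation,
  so \<open>f(an+b) = e^{i\<theta> v_p(b)}\<close> and \<open>f(an+d) = e^{i\<theta> v_p(d)} = -f(an+b)\<close> for every large \<open>n\<close>;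
  their distance is constantly 2.\<close>

definition valuation_character :: "int \<Rightarrow> real \<Rightarrow> nat \<Rightarrow> complex" where
  "valuation_character q \<theta> m = cis (\<theta> * real (multiplicity q (int m)))"

lemma cm_unimodular_valuation_character:
  assumes "prime q"
  shows "cm_unimodular (valuation_character q \<theta>)"
  unfolding cm_unimodular_def
proof (intro conjI allI impI)
  fix n :: nat
  show "cmod (valuation_character q \<theta> n) = 1"
    by (simp add: valuation_character_def)
next
  fix m n :: nat
  assume "m \<ge> 1" "n \<ge> 1"
  then have "multiplicity q (int (m * n)) = multiplicity q (int m) + multiplicity q (int n)"
    using assms unfolding of_nat_mult by (intro prime_elem_multiplicity_mult_distrib) auto
  then show "valuation_character q \<theta> (m * n) = valuation_character q \<theta> m * valuation_character q \<theta> n"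
    by (simp add: valuation_character_def cis_mult distrib_left)
qed

lemma multiplicity_mult_add_eq:
  fixes q A n c :: int
  assumes "prime q" "A \<noteq> 0" "c \<noteq> 0" "multiplicity q c < multiplicity q A"
  shows "multiplicity q (A * n + c) = multiplicity q c"
proof (cases "n = 0")
  case False
  have "multiplicity q (A * n) = multiplicity q A + multiplicity q n"
    using assms(1,2) False by (intro prime_elem_multiplicity_mult_distrib) auto
  then have "multiplicity q c < multiplicity q (A * n)"
    using assms(4) by linarith
  then show ?thesis
    using multiplicity_sum_lt[of q c "A * n"] assms(2,3) False by (simp add: add.commute)
qed simp

lemma cmod_cis_diff_antipodal:
  fixes u v :: nat
  assumes "u \<noteq> v"
  shows "cmod (cis (pi / (real v - real u) * real u) - cis (pi / (real v - real u) * real v)) = 2"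
proof -
  define \<theta> where "\<theta> = pi / (real v - real u)"
  have "\<theta> * real v = \<theta> * real u + pi"
    using assms by (simp add: \<theta>_def field_simps)
  then have "cis (\<theta> * real v) = - cis (\<theta> * real u)"
    by (simp add: cis_mult[symmetric])
  then show ?thesis
    by (simp add: \<theta>_def norm_mult)
qed

lemma eventually_linear_ge_1:
  fixes a :: nat and c :: int
  assumes "a \<ge> 1"
  shows "eventually (\<lambda>n. int a * int n + c \<ge> 1) sequentially"
  unfolding eventually_sequentially
proof (intro exI allI impI)
  fix n :: nat
  assume "n \<ge> nat (\<bar>c\<bar> + 1)"
  moreover have "int a * int n \<ge> int n"
    using assms mult_right_mono[of 1 "int a" "int n"] by simp
  ultimately show "int a * int n + c \<ge> 1" by linarith
qed

theorem lemma4p3: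
  fixes a :: nat and b d :: int and p :: nat
  assumes "a \<ge> 1"
    and "prime p"
    and "vp p (int a) > max (vp p b) (vp p d)"
    and "vp p b \<noteq> vp p d"
  shows "\<exists>f. cm_unimodular f \<and>
    Liminf sequentially
      (\<lambda>n::nat. ereal (cmod (f (nat (int a * int n + b)) - f (nat (int a * int n + d))))) > 0"
proof -
  define q where "q = int p"
  have q: "prime q" using assms(2) by (simp add: q_def)
  have a0: "int a \<noteq> 0" using assms(1) by simp
  have b0: "b \<noteq> 0" and d0: "d \<noteq> 0" using assms(3) by (auto simp: vp_def)
  have vb: "multiplicity q b < multiplicity q (int a)"
    and vd: "multiplicity q d < multiplicity q (int a)"
    and vne: "multiplicity q b \<noteq> multiplicity q d"
    using assms(3,4) a0 b0 d0 by (auto simp: vp_def q_def)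
  define f where
    "f = valuation_character q (pi / (real (multiplicity q d) - real (multiplicity q b)))"
  have "eventually (\<lambda>n. ereal 1 \<le> ereal (cmod (f (nat (int a * int n + b)) - f (nat (int a * int n + d))))) sequentially"
    using eventually_linear_ge_1[OF assms(1), of b] eventually_linear_ge_1[OF assms(1), of d]
  proof eventually_elim
    case (elim n)
    then show ?case
      using multiplicity_mult_add_eq[OF q a0 b0 vb] multiplicity_mult_add_eq[OF q a0 d0 vd]
        cmod_cis_diff_antipodal[OF vne]
      by (simp add: f_def valuation_character_def)
  qed
  then have "ereal 1 \<le> Liminf sequentially (\<lambda>n. ereal (cmod (f (nat (int a * int n + b)) - f (nat (int a * int n + d)))))"
    by (rule Liminf_bounded)
  then have "Liminf sequentially (\<lambda>n. ereal (cmod (f (nat (int a * int n + b)) - f (nat (int a * int n + d))))) > 0"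
    by (rule less_le_trans[rotated]) simp
  moreover have "cm_unimodular f"
    unfolding f_def by (rule cm_unimodular_valuation_character[OF q])
  ultimately show ?thesis by blast
qed

end
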